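(* Let $\mathcal{P}=(|K|,V)$ be a polyhedral model. For all $x\in|K|$ and every SLCS$_\eta$ formula $\Phi$: $\mathcal{P},x\models\Phi$ if and only if $\mathbb{F}(\mathcal{P}),\mathbb{F}(x)\models\Phi$.
   Context: Fix a set PL of proposition letters. A simplex $\sigma\subseteq\mathbb{R}^m$ is the convex hull of $d+1$ affinely independent points $v_0,\dots,v_d$; its faces are the simplices spanned by nonempty subsets of its vertices. Its relative interior (cell) is $\tilde\sigma=\{\sum_i\lambda_iv_i:\lambda_i\in(0,1],\sum_i\lambda_i=1\}$. A simplicial complex $K$ is a finite set of simplices in $\mathbb{R}^m$ closed under faces, any two of which intersect in a common face or in $\emptyset$. Its set of cells $\tilde K=\{\tilde\sigma:\sigma\in K\}$ is partially ordered by $\tilde\sigma_1\preceq\tilde\sigma_2$ iff $\tilde\sigma_1$ is contained in the topological closure of $\tilde\sigma_2$ (equivalently, $\sigma_1$ is a face of $\sigma_2$). The polyhedron $|K|$ is the union of the simplices of $K$ with the subspace topology; its cells partition $|K|$. A polyhedral model is $\mathcal{P}=(|K|,V)$ with $V:\mathrm{PL}\to\mathcal{P}(|K|)$ such that each $V(p)$ is a union of cells. Its cell poset model is $\mathbb{F}(\mathcal{P})=(\tilde K,\preceq,\mathcal{V})$ with $\tilde\sigma\in\mathcal{V}(p)$ iff $\tilde\sigma\subseteq V(p)$; for $x\in|K|$, $\mathbb{F}(x)$ is the unique cell containing $x$. A topological path from $x$ is a continuous $\pi:[0,1]\to|K|$ with $\pi(0)=x$. In a poset $(W,\preceq)$ a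 $\pm$-path of length $\ell\ge2$ from $w$ is $\pi:\{0,\dots,\ell\}\to W$ with $\pi(0)=w$, consecutive elements comparable under $\preceq$, $\pi(0)\preceq\pi(1)$ and $\pi(\ell)\preceq\pi(\ell-1)$. SLCS$_\eta$ formulas: $\Phi::=p\mid\neg\Phi\mid\Phi_1\wedge\Phi_2\mid\eta(\Phi_1,\Phi_2)$, $p\in\mathrm{PL}$. On polyhedral models: $x\models p$ iff $x\in V(p)$; negation, conjunction standard; $x\models\eta(\Phi_1,\Phi_2)$ iff some topological path $\pi$ from $x$ has $\pi(1)\models\Phi_2$ and $\pi(r)\models\Phi_1$ for all $r\in[0,1)$. On poset models $(W,\preceq,\mathcal{V})$: $w\models p$ iff $w\in\mathcal{V}(p)$; negation, conjunction standard; $w\models\eta(\Phi_1,\Phi_2)$ iff some $\pm$-path $\pi$ of length $\ell$ from $w$ has $\pi(\ell)\models\Phi_2$ and $\pi(i)\models\Phi_1$ for all $0\le i<\ell$. *)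

theory Defs
  imports "HOL-Analysis.Analysis"
begin

definition simplex_on :: "'a::euclidean_space set \<Rightarrow> 'a set \<Rightarrow> bool" where
  "simplex_on V s \<longleftrightarrow> finite V \<and> V \<noteq> {} \<and> \<not> affine_dependent V \<and> s = convex hull V"

definition is_simplex :: "'a::euclidean_space set \<Rightarrow> bool" where
  "is_simplex s \<longleftrightarrow> (\<exists>V. simplex_on V s)"

definition simplex_face :: "'a::euclidean_space set \<Rightarrow> 'a set \<Rightarrow> bool" where
  "simplex_face t s \<longleftrightarrow> (\<exists>V W. simplex_on V s \<and> W \<subseteq> V \<and> W \<noteq> {} \<and> t = convex hull W)"

definition cell :: "'a::euclidean_space set \<Rightarrow> 'a set" where
  "cell s = {y. \<exists>V l. simplex_on V s \<and> (\<forall>v\<in>V. 0 < l v \<and> l v \<le> 1) \<and> sum l V = 1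
                    \<and> y = (\<Sum>v\<in>V. l v *\<^sub>R v)}"

definition simplicial_complex :: "'a::euclidean_space set set \<Rightarrow> bool" where
  "simplicial_complex K \<longleftrightarrow> finite K \<and> (\<forall>s\<in>K. is_simplex s)
     \<and> (\<forall>s\<in>K. \<forall>t. simplex_face t s \<longrightarrow> t \<in> K)
     \<and> (\<forall>s\<in>K. \<forall>t\<in>K. s \<inter> t = {} \<or> (simplex_face (s \<inter> t) s \<and> simplex_face (s \<inter> t) t))"

definition polyhedron :: "'a::euclidean_space set set \<Rightarrow> 'a set" where
  "polyhedron K = \<Union>K"

definition cells :: "'a::euclidean_space set set \<Rightarrow> 'a set set" where
  "cells K = cell ` K"

definition cell_le :: "'a::euclidean_space set \<Rightarrow> 'a set \<Rightarrow> bool" where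
  "cell_le c1 c2 \<longleftrightarrow> c1 \<subseteq> closure c2"

definition polyhedral_valuation :: "'a::euclidean_space set set \<Rightarrow> ('p \<Rightarrow> 'a set) \<Rightarrow> bool" where
  "polyhedral_valuation K V \<longleftrightarrow> (\<forall>p. \<exists>C \<subseteq> cells K. V p = \<Union>C)"

definition cell_val :: "'a::euclidean_space set set \<Rightarrow> ('p \<Rightarrow> 'a set) \<Rightarrow> 'p \<Rightarrow> 'a set set" where
  "cell_val K V p = {c \<in> cells K. c \<subseteq> V p}"

definition cell_of :: "'a::euclidean_space set set \<Rightarrow> 'a \<Rightarrow> 'a set" where
  "cell_of K x = (THE c. c \<in> cells K \<and> x \<in> c)"

datatype 'p form = Atom 'p | Neg "'p form" | Conj "'p form" "'p form" | Eta "'p form" "'p form"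

primrec sat_poly :: "'a::euclidean_space set set \<Rightarrow> ('p \<Rightarrow> 'a set) \<Rightarrow> 'p form \<Rightarrow> 'a \<Rightarrow> bool" where
  "sat_poly K V (Atom p) x \<longleftrightarrow> x \<in> V p"
| "sat_poly K V (Neg f) x \<longleftrightarrow> \<not> sat_poly K V f x"
| "sat_poly K V (Conj f g) x \<longleftrightarrow> sat_poly K V f x \<and> sat_poly K V g x"
| "sat_poly K V (Eta f g) x \<longleftrightarrow>
     (\<exists>\<pi>::real \<Rightarrow> 'a. continuous_on {0..1} \<pi> \<and> \<pi> ` {0..1} \<subseteq> polyhedron K \<and> \<pi> 0 = x
        \<and> sat_poly K V g (\<pi> 1) \<and> (\<forall>r\<in>{0..<1}. sat_poly K V f (\<pi> r)))"

definition pm_path :: "'w set \<Rightarrow> ('w \<Rightarrow> 'w \<Rightarrow> bool) \<Rightarrow> 'w \<Rightarrow> nat \<Rightarrow> (nat \<Rightarrow> 'w) \<Rightarrow> bool" where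
  "pm_path W R w l \<pi> \<longleftrightarrow> l \<ge> 2 \<and> \<pi> 0 = w \<and> (\<forall>i\<le>l. \<pi> i \<in> W)
     \<and> (\<forall>i<l. R (\<pi> i) (\<pi> (Suc i)) \<or> R (\<pi> (Suc i)) (\<pi> i))
     \<and> R (\<pi> 0) (\<pi> 1) \<and> R (\<pi> l) (\<pi> (l - 1))"

primrec sat_poset :: "'w set \<Rightarrow> ('w \<Rightarrow> 'w \<Rightarrow> bool) \<Rightarrow> ('p \<Rightarrow> 'w set) \<Rightarrow> 'p form \<Rightarrow> 'w \<Rightarrow> bool" where
  "sat_poset W R Vs (Atom p) w \<longleftrightarrow> w \<in> Vs p"
| "sat_poset W R Vs (Neg f) w \<longleftrightarrow> \<not> sat_poset W R Vs f w"
| "sat_poset W R Vs (Conj f g) w \<longleftrightarrow> sat_poset W R Vs f w \<and> sat_poset W R Vs g w"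
| "sat_poset W R Vs (Eta f g) w \<longleftrightarrow>
     (\<exists>l \<pi>. pm_path W R w l \<pi> \<and> sat_poset W R Vs g (\<pi> l) \<and> (\<forall>i<l. sat_poset W R Vs f (\<pi> i)))"

end

theory Submission
  imports Defs
begin

text \<open>Cells partition the polyhedron and atoms are unions of cells, so by induction on the
  formula it suffices to transfer \<open>\<eta>\<close>-witnesses between the two semantics.
  A topological path \<open>\<gamma>\<close> meets finitely many cells on \<open>[0,1)\<close>; a point in the closure of a
  cell \<open>d\<close> lies in a cell below \<open>d\<close>, so connectedness of \<open>[0,1)\<close> puts all of them into one
  zigzag component of \<open>\<preceq>\<close>, and \<open>\<gamma> 1\<close> into the closure of a member of it; this zigzag is a
  \<open>\<pm>\<close>-path. Conversely a \<open>\<pm>\<close>-path is realised by a polygonal path: a segment from a point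
  of a cell towards a point of its closure stays in the cell (a relative interior) except
  possibly at its far end.\<close>

lemma simplex_onD:
  assumes "simplex_on V s"
  shows "convex s" "closed s" "s \<noteq> {}"
  using assms unfolding simplex_on_def
  by (auto simp: convex_convex_hull finite_imp_compact compact_convex_hull compact_imp_closed)

lemma rel_interior_simplex_explicit:
  assumes "simplex_on V s"
  shows "rel_interior s =
    {y. \<exists>l. (\<forall>v\<in>V. 0 < l v \<and> l v \<le> 1) \<and> sum l V = 1 \<and> y = (\<Sum>v\<in>V. l v *\<^sub>R v)}"
proof -
  have fin: "finite V" and ind: "\<not> affine_dependent V" and s: "s = convex hull V"
    using assms by (auto simp: simplex_on_def)
  have le1: "l v \<le> 1" if "\<forall>w\<in>V. 0 < l w" "sum l V = 1" "v \<in> V" for l :: "'a \<Rightarrow> real" and v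
    using member_le_sum[of v V l] that fin by (auto simp: less_imp_le)
  show ?thesis
    unfolding s rel_interior_convex_hull_explicit[OF ind] using le1 by blast
qed

lemma cell_eq_rel_interior: "is_simplex s \<Longrightarrow> cell s = rel_interior s"
  unfolding is_simplex_def cell_def using rel_interior_simplex_explicit by blast

lemma simplex_face_face_of: "simplex_face t s \<Longrightarrow> t face_of s"
  unfolding simplex_face_def simplex_on_def
  using face_of_convex_hull_affine_independent by blast

lemma simplex_point_in_rel_interior_face:
  assumes "simplex_on V s" and "y \<in> s"
  shows "\<exists>W. W \<subseteq> V \<and> W \<noteq> {} \<and> y \<in> rel_interior (convex hull W)"
proof -
  have fin: "finite V" and ind: "\<not> affine_dependent V" and s: "s = convex hull V"
    using assms(1) by (auto simp: simplex_on_def)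
  obtain u where u: "\<forall>v\<in>V. 0 \<le> u v" "sum u V = 1" "(\<Sum>v\<in>V. u v *\<^sub>R v) = y"
    using assms(2) s convex_hull_finite[OF fin] by auto
  define W where "W = {v\<in>V. 0 < u v}"
  have WV: "W \<subseteq> V" unfolding W_def by auto
  have "sum u V = sum u W" "(\<Sum>v\<in>V. u v *\<^sub>R v) = (\<Sum>v\<in>W. u v *\<^sub>R v)"
    by (rule sum.mono_neutral_right[OF fin WV]; use u(1) in \<open>force simp: W_def\<close>)+
  then have sumW: "sum u W = 1" and yW: "(\<Sum>v\<in>W. u v *\<^sub>R v) = y"
    using u by simp_all
  have indW: "\<not> affine_dependent W" using ind WV affine_dependent_subset by blast
  have "y \<in> rel_interior (convex hull W)"
    unfolding rel_interior_convex_hull_explicit[OF indW] using sumW yW by (force simp: W_def)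
  moreover have "W \<noteq> {}" using sumW by auto
  ultimately show ?thesis using WV by blast
qed

lemma linepath_in_rel_interior:
  fixes S :: "'a::euclidean_space set"
  assumes "convex S" and "a \<in> rel_interior S" and "b \<in> closure S" and "u \<in> {0..<1}"
  shows "linepath a b u \<in> rel_interior S"
proof -
  have "b - (1 - u) *\<^sub>R (b - a) \<in> rel_interior S"
    using rel_interior_closure_convex_shrink[OF assms(1-3)] assms(4) by auto
  moreover have "b - (1 - u) *\<^sub>R (b - a) = linepath a b u"
    by (simp add: linepath_def algebra_simps)
  ultimately show ?thesis by simp
qed

lemma path_closure_chain:
  fixes \<gamma> :: "real \<Rightarrow> 'a::topological_space" and L :: "real \<Rightarrow> 'a set"
  assumes cont: "continuous_on {0..1} \<gamma>" and fin: "finite S"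
    and L: "\<And>r. r \<in> {0..<1} \<Longrightarrow> L r \<in> S \<and> \<gamma> r \<in> closure (L r)"
    and adj: "\<And>r d. r \<in> {0..<1} \<Longrightarrow> d \<in> S \<Longrightarrow> \<gamma> r \<in> closure d \<Longrightarrow> Z (L r) d \<and> Z d (L r)"
  shows "\<exists>d\<in>S. Z\<^sup>*\<^sup>* (L 0) d \<and> \<gamma> 1 \<in> closure d"
proof -
  define T where "T = {d \<in> S. Z\<^sup>*\<^sup>* (L 0) d}"
  define CT where "CT = \<Union>(closure ` T)"
  define CN where "CN = \<Union>(closure ` (S - T))"
  define A where "A = {0..<1} \<inter> \<gamma> -` CT"
  define B where "B = {0..<1} \<inter> \<gamma> -` CN"
  have cont': "continuous_on {0..<1} \<gamma>" using cont by (rule continuous_on_subset) auto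
  have "closed CT" "closed CN"
    unfolding CT_def CN_def T_def using fin by (intro closed_Union; simp)+
  then have closed_AB: "closedin (top_of_set {0..<1}) A" "closedin (top_of_set {0..<1}) B"
    unfolding A_def B_def by (auto intro: continuous_closedin_preimage[OF cont'])
  have T_step: "L r \<in> T" if "r \<in> {0..<1}" "d \<in> T" "\<gamma> r \<in> closure d" for r d
    using that L[of r] adj[of r d] unfolding T_def by (auto intro: rtranclp.rtrancl_into_rtrancl)
  have "A \<union> B = {0..<1}"
    using L unfolding A_def B_def CT_def CN_def by blast
  moreover have "A \<inter> B = {}"
  proof (rule ccontr)
    assume "A \<inter> B \<noteq> {}"
    then obtain r d d' where r: "r \<in> {0..<1}" and d: "d \<in> T" "\<gamma> r \<in> closure d"
      and d': "d' \<in> S - T" "\<gamma> r \<in> closure d'"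
      unfolding A_def B_def CT_def CN_def by blast
    have "L r \<in> T" using T_step r d by blast
    then have "d' \<in> T" using adj[OF r _ d'(2)] d'(1) unfolding T_def
      by (auto intro: rtranclp.rtrancl_into_rtrancl)
    then show False using d' by blast
  qed
  moreover have "0 \<in> A"
    using L[of 0] unfolding A_def CT_def T_def by auto
  ultimately have "B = {}"
    using connected_Ico[of "0::real" 1] closed_AB unfolding connected_closedin by blast
  then have "\<gamma> ` {0..<1} \<subseteq> CT"
    using \<open>A \<union> B = {0..<1}\<close> unfolding A_def by blast
  then have "\<gamma> ` {0..1} \<subseteq> CT"
    using image_closure_subset[of "{0..<1}" \<gamma> CT] cont \<open>closed CT\<close> by simp
  then have "\<gamma> 1 \<in> CT" by auto
  then show ?thesis unfolding CT_def T_def by blast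
qed

text \<open>The first step of a \<open>\<pm>\<close>-path must go up and the last one down, so the zigzag
  \<open>f 0 = w, \<dots>, f n = d\<close> is padded to \<open>w, w, f 1, \<dots>, f n, e\<close>; in the definition of \<open>\<pi>\<close>
  below the doubled \<open>w\<close> comes from the truncation \<open>0 - 1 = 0\<close>.\<close>
lemma pm_path_of_zigzag:
  assumes refl: "\<And>v. v \<in> W \<Longrightarrow> R v v" and SW: "S \<subseteq> W" and w: "w \<in> S"
    and zigzag: "(\<lambda>c d. c \<in> S \<and> d \<in> S \<and> (R c d \<or> R d c))\<^sup>*\<^sup>* w d"
    and e: "e \<in> W" "R e d"
  shows "\<exists>l \<pi>. pm_path W R w l \<pi> \<and> \<pi> l = e \<and> (\<forall>i<l. \<pi> i \<in> S)"
proof -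
  obtain n where "((\<lambda>c d. c \<in> S \<and> d \<in> S \<and> (R c d \<or> R d c)) ^^ n) w d"
    using rtranclp_imp_relpowp[OF zigzag] by blast
  then obtain f where f0: "f 0 = w" and fn: "f n = d"
    and f: "\<forall>i<n. f i \<in> S \<and> f (Suc i) \<in> S \<and> (R (f i) (f (Suc i)) \<or> R (f (Suc i)) (f i))"
    unfolding relpowp_fun_conv by blast
  have fS: "f i \<in> S" if "i \<le> n" for i
  proof (cases i)
    case (Suc j)
    then show ?thesis using f that by simp
  qed (use f0 w in simp)
  define \<pi> where "\<pi> i = (if i \<le> Suc n then f (i - 1) else e)" for i
  have \<pi>_start: "\<pi> 0 = w" "\<pi> 1 = w" using f0 by (simp_all add: \<pi>_def)
  have \<pi>_end: "\<pi> (n + 2) = e" "\<pi> (n + 1) = d" using fn by (simp_all add: \<pi>_def)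
  have \<pi>S: "\<pi> i \<in> S" if "i < n + 2" for i
    using that fS by (simp add: \<pi>_def)
  have \<pi>W: "\<pi> i \<in> W" if "i \<le> n + 2" for i
    using that \<pi>S \<pi>_end(1) e(1) SW by (cases "i = n + 2") auto
  have \<pi>R: "R (\<pi> i) (\<pi> (Suc i)) \<or> R (\<pi> (Suc i)) (\<pi> i)" if i: "i < n + 2" for i
  proof -
    consider "i = 0" | "0 < i" "i \<le> n" | "i = n + 1" using i by linarith
    then show ?thesis
    proof cases
      case 1
      then show ?thesis using \<pi>_start refl SW w by auto
    next
      case 2
      then have "Suc (i - 1) = i" "i - 1 < n" by simp_all
      then show ?thesis using f 2 by (auto simp: \<pi>_def)
    next
      case 3
      then show ?thesis using \<pi>_end e(2) by simp
    qed
  qed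
  have "pm_path W R w (n + 2) \<pi>"
    unfolding pm_path_def
  proof (intro conjI allI impI)
    show "R (\<pi> 0) (\<pi> 1)" using \<pi>_start refl SW w by auto
    show "R (\<pi> (n + 2)) (\<pi> (n + 2 - 1))" using \<pi>_end e(2) by simp
  qed (use \<pi>_start \<pi>W \<pi>R in auto)
  then show ?thesis using \<pi>_end \<pi>S by blast
qed

lemma cell_le_refl: "cell_le c c"
  unfolding cell_le_def using closure_subset .

context
  fixes K :: "'a::euclidean_space set set"
  assumes K: "simplicial_complex K"
begin

lemma complex_simplex: "s \<in> K \<Longrightarrow> \<exists>V. simplex_on V s"
  using K unfolding simplicial_complex_def is_simplex_def by blast

lemma complex_cell_eq_rel_interior: "s \<in> K \<Longrightarrow> cell s = rel_interior s"
  using K cell_eq_rel_interior unfolding simplicial_complex_def by blast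

lemma closure_cell: "s \<in> K \<Longrightarrow> closure (cell s) = s"
  using complex_simplex simplex_onD complex_cell_eq_rel_interior
  by (metis closure_closed convex_closure_rel_interior)

lemma cell_nonempty: "c \<in> cells K \<Longrightarrow> c \<noteq> {}"
  using complex_simplex simplex_onD complex_cell_eq_rel_interior
  by (metis cells_def imageE rel_interior_eq_empty)

lemma cells_subset_polyhedron: "c \<in> cells K \<Longrightarrow> c \<subseteq> polyhedron K"
  using complex_cell_eq_rel_interior rel_interior_subset
  by (fastforce simp: cells_def polyhedron_def)

lemma finite_cells: "finite (cells K)"
  using K by (simp add: simplicial_complex_def cells_def)

lemma complex_face_closed: "s \<in> K \<Longrightarrow> simplex_face t s \<Longrightarrow> t \<in> K"
  using K unfolding simplicial_complex_def by blast

lemma complex_Int_face: "s \<in> K \<Longrightarrow> t \<in> K \<Longrightarrow> s \<inter> t \<noteq> {} \<Longrightarrow> simplex_face (s \<inter> t) t"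
  using K unfolding simplicial_complex_def by blast

lemma subset_if_rel_interior_meets:
  assumes s: "s \<in> K" and t: "t \<in> K" and y: "y \<in> rel_interior t" "y \<in> s"
  shows "t \<subseteq> s"
proof -
  have "y \<in> t" using y(1) rel_interior_subset by blast
  then have "simplex_face (s \<inter> t) t" using complex_Int_face[OF s t] y(2) by blast
  then have face: "(s \<inter> t) face_of t" by (rule simplex_face_face_of)
  have "s \<inter> t = t"
  proof (rule ccontr)
    assume "s \<inter> t \<noteq> t"
    then have "(s \<inter> t) \<inter> rel_interior t = {}" using face_of_disjoint_rel_interior face by blast
    then show False using y \<open>y \<in> t\<close> by blast
  qed
  then show ?thesis by blast
qed

lemma ex1_cell: "y \<in> polyhedron K \<Longrightarrow> \<exists>!c. c \<in> cells K \<and> y \<in> c"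
proof -
  assume "y \<in> polyhedron K"
  then obtain s where s: "s \<in> K" "y \<in> s" unfolding polyhedron_def by blast
  obtain V where V: "simplex_on V s" using complex_simplex[OF s(1)] by blast
  obtain W where W: "W \<subseteq> V" "W \<noteq> {}" "y \<in> rel_interior (convex hull W)"
    using simplex_point_in_rel_interior_face[OF V s(2)] by blast
  have "simplex_face (convex hull W) s" unfolding simplex_face_def using V W by blast
  then have tK: "convex hull W \<in> K" using complex_face_closed s(1) by blast
  have "s' = t'" if "s' \<in> K" "t' \<in> K" "y \<in> rel_interior s'" "y \<in> rel_interior t'" for s' t'
    using that subset_if_rel_interior_meets rel_interior_subset by (metis subset_antisym subsetD)
  then show ?thesis
    using tK W(3) complex_cell_eq_rel_interior
    by (auto simp: cells_def intro!: ex1I[of _ "cell (convex hull W)"])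
qed

lemma cell_of_in_cells: "y \<in> polyhedron K \<Longrightarrow> cell_of K y \<in> cells K"
  and mem_cell_of: "y \<in> polyhedron K \<Longrightarrow> y \<in> cell_of K y"
  using theI'[OF ex1_cell] unfolding cell_of_def by blast+

lemma cell_of_eq: "c \<in> cells K \<Longrightarrow> y \<in> c \<Longrightarrow> cell_of K y = c"
  using the1_equality[OF ex1_cell] cells_subset_polyhedron unfolding cell_of_def by blast

lemma cell_le_cell_of:
  assumes c: "c \<in> cells K" and y: "y \<in> closure c"
  shows "cell_le (cell_of K y) c"
proof -
  obtain s where s: "s \<in> K" "c = cell s" using c by (auto simp: cells_def)
  then have ys: "y \<in> s" using y closure_cell by simp
  then have yP: "y \<in> polyhedron K" using s(1) by (auto simp: polyhedron_def)
  obtain t where t: "t \<in> K" "cell_of K y = cell t"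
    using cell_of_in_cells[OF yP] by (auto simp: cells_def)
  then have "y \<in> rel_interior t" using mem_cell_of[OF yP] complex_cell_eq_rel_interior by simp
  then have "t \<subseteq> s" using subset_if_rel_interior_meets s(1) t(1) ys by blast
  then have "cell_of K y \<subseteq> s" using t complex_cell_eq_rel_interior rel_interior_subset by (metis order_trans)
  then show ?thesis using s closure_cell unfolding cell_le_def by simp
qed

section \<open>From \<open>\<pm>\<close>-paths to topological paths\<close>

lemma linepath_in_cell:
  assumes "d \<in> cells K" and "a \<in> d" and "b \<in> closure d" and "u \<in> {0..<1}"
  shows "linepath a b u \<in> d"
proof -
  obtain t where t: "t \<in> K" "d = cell t" using assms(1) by (auto simp: cells_def)
  have "convex t" using complex_simplex[OF t(1)] simplex_onD(1) by blast
  moreover have "a \<in> rel_interior t" using assms(2) t complex_cell_eq_rel_interior by simp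
  moreover have "b \<in> closure t" using assms(3) t closure_cell closure_subset by auto
  ultimately show ?thesis
    using linepath_in_rel_interior assms(4) t complex_cell_eq_rel_interior by simp
qed

lemma closed_segment_subset_cells:
  assumes c: "c \<in> cells K" and d: "d \<in> cells K" and cmp: "cell_le c d \<or> cell_le d c"
    and a: "a \<in> c" and b: "b \<in> d"
  shows "closed_segment a b \<subseteq> c \<union> d"
proof
  fix y assume "y \<in> closed_segment a b"
  then obtain u where u: "u \<in> {0..1}" "y = linepath a b u"
    by (metis imageE path_image_def path_image_linepath)
  consider "u = 0" | "u = 1" | "u \<in> {0<..<1}" using u(1) by fastforce
  then show "y \<in> c \<union> d"
  proof cases
    case 3
    show ?thesis
    proof (cases "cell_le c d")
      case True
      then have "a \<in> closure d" using a unfolding cell_le_def by blast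
      then have "linepath b a (1 - u) \<in> d" using linepath_in_cell[OF d b] 3 by simp
      moreover have "linepath b a (1 - u) = linepath a b u"
        by (simp add: linepath_def algebra_simps)
      ultimately show ?thesis using u(2) by simp
    next
      case False
      then have "b \<in> closure c" using cmp b unfolding cell_le_def by blast
      then have "linepath a b u \<in> c" using linepath_in_cell[OF c a] 3 by simp
      then show ?thesis using u(2) by simp
    qed
  qed (use u a b in \<open>simp_all add: linepath_def\<close>)
qed

lemma path_through_cells:
  assumes "\<And>i. i \<le> k \<Longrightarrow> \<pi> i \<in> cells K"
    and "\<And>i. i < k \<Longrightarrow> cell_le (\<pi> i) (\<pi> (Suc i)) \<or> cell_le (\<pi> (Suc i)) (\<pi> i)"
    and "x \<in> \<pi> 0" and "b \<in> \<pi> k"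
  shows "\<exists>g. path g \<and> pathstart g = x \<and> pathfinish g = b \<and> path_image g \<subseteq> (\<Union>i\<le>k. \<pi> i)"
  using assms
proof (induction k arbitrary: b)
  case 0
  then have "closed_segment x b \<subseteq> \<pi> 0"
    using closed_segment_subset_cells[of "\<pi> 0" "\<pi> 0"] cell_le_refl by blast
  then show ?case by (intro exI[of _ "linepath x b"]) auto
next
  case (Suc k)
  have cells: "\<pi> k \<in> cells K" "\<pi> (Suc k) \<in> cells K" using Suc.prems(1) by simp_all
  obtain a where a: "a \<in> \<pi> k" using cell_nonempty[OF cells(1)] by blast
  have "\<And>i. i \<le> k \<Longrightarrow> \<pi> i \<in> cells K"
    "\<And>i. i < k \<Longrightarrow> cell_le (\<pi> i) (\<pi> (Suc i)) \<or> cell_le (\<pi> (Suc i)) (\<pi> i)"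
    using Suc.prems(1,2) by simp_all
  then obtain g where g: "path g" "pathstart g = x" "pathfinish g = a"
    "path_image g \<subseteq> (\<Union>i\<le>k. \<pi> i)"
    using Suc.IH[OF _ _ Suc.prems(3) a] by blast
  have "closed_segment a b \<subseteq> \<pi> k \<union> \<pi> (Suc k)"
    using closed_segment_subset_cells[OF cells Suc.prems(2) a Suc.prems(4)] by simp
  moreover have "path_image (g +++ linepath a b) = path_image g \<union> closed_segment a b"
    using g(3) by (simp add: path_image_join)
  ultimately have "path_image (g +++ linepath a b) \<subseteq> (\<Union>i\<le>Suc k. \<pi> i)"
    using g(4) by (auto simp: atMost_Suc)
  then show ?case using g by (intro exI[of _ "g +++ linepath a b"]) simp
qed

lemma path_of_pm_path:
  assumes x: "x \<in> polyhedron K" and pm: "pm_path (cells K) cell_le (cell_of K x) l \<pi>"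
  shows "\<exists>\<gamma>. path \<gamma> \<and> \<gamma> 0 = x \<and> path_image \<gamma> \<subseteq> polyhedron K \<and> \<gamma> 1 \<in> \<pi> l
           \<and> (\<forall>r\<in>{0..<1}. \<exists>i<l. \<gamma> r \<in> \<pi> i)"
proof -
  have l2: "l \<ge> 2" and cells: "\<And>i. i \<le> l \<Longrightarrow> \<pi> i \<in> cells K"
    and cmp: "\<And>i. i < l \<Longrightarrow> cell_le (\<pi> i) (\<pi> (Suc i)) \<or> cell_le (\<pi> (Suc i)) (\<pi> i)"
    and x0: "x \<in> \<pi> 0" and last: "cell_le (\<pi> l) (\<pi> (l - 1))"
    using pm mem_cell_of[OF x] unfolding pm_path_def by auto
  have cells_last: "\<pi> (l - 1) \<in> cells K" "\<pi> l \<in> cells K" using cells by simp_all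
  obtain a b where a: "a \<in> \<pi> (l - 1)" and b: "b \<in> \<pi> l"
    using cell_nonempty[OF cells_last(1)] cell_nonempty[OF cells_last(2)] by blast
  have "\<And>i. i \<le> l - 1 \<Longrightarrow> \<pi> i \<in> cells K"
    "\<And>i. i < l - 1 \<Longrightarrow> cell_le (\<pi> i) (\<pi> (Suc i)) \<or> cell_le (\<pi> (Suc i)) (\<pi> i)"
    using cells cmp by simp_all
  then obtain g where g: "path g" "pathstart g = x" "pathfinish g = a"
    "path_image g \<subseteq> (\<Union>i\<le>l - 1. \<pi> i)"
    using path_through_cells[OF _ _ x0 a] by blast
  define \<gamma> where "\<gamma> = g +++ linepath a b"
  have "path_image \<gamma> = path_image g \<union> closed_segment a b"
    using g(3) by (simp add: \<gamma>_def path_image_join)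
  moreover have "closed_segment a b \<subseteq> \<pi> (l - 1) \<union> \<pi> l"
    using closed_segment_subset_cells[OF cells_last _ a b] last by blast
  moreover have "(\<Union>i\<le>l. \<pi> i) \<subseteq> polyhedron K"
    using cells cells_subset_polyhedron by blast
  ultimately have "path_image \<gamma> \<subseteq> polyhedron K"
    using g(4) l2 by fastforce
  moreover have "\<exists>i<l. \<gamma> r \<in> \<pi> i" if r: "r \<in> {0..<1}" for r
  proof (cases "r \<le> 1/2")
    case True
    then have "\<gamma> r = g (2 * r)" by (simp add: \<gamma>_def joinpaths_def)
    moreover have "g (2 * r) \<in> path_image g" using True r by (simp add: path_image_def)
    ultimately obtain i where "i \<le> l - 1" "\<gamma> r \<in> \<pi> i" using g(4) by auto
    then show ?thesis using l2 by (intro exI[of _ i]) auto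
  next
    case False
    then have "\<gamma> r = linepath a b (2 * r - 1)" by (simp add: \<gamma>_def joinpaths_def)
    moreover have "b \<in> closure (\<pi> (l - 1))" using b last unfolding cell_le_def by blast
    ultimately have "\<gamma> r \<in> \<pi> (l - 1)"
      using linepath_in_cell[OF cells_last(1) a] False r by simp
    then show ?thesis using l2 by (intro exI[of _ "l - 1"]) simp
  qed
  moreover have "path \<gamma>" using g(1,3) unfolding \<gamma>_def by (intro path_join_imp) auto
  moreover have "\<gamma> 0 = x" "\<gamma> 1 = b"
    using g(2) unfolding \<gamma>_def by (auto simp: joinpaths_def pathstart_def linepath_def)
  ultimately show ?thesis using b by blast
qed

section \<open>From topological paths to \<open>\<pm>\<close>-paths\<close>

lemma pm_path_of_path:
  assumes "path \<gamma>" and "path_image \<gamma> \<subseteq> polyhedron K"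
  shows "\<exists>l \<pi>. pm_path (cells K) cell_le (cell_of K (\<gamma> 0)) l \<pi> \<and> \<pi> l = cell_of K (\<gamma> 1)
           \<and> (\<forall>i<l. \<exists>r\<in>{0..<1}. \<pi> i = cell_of K (\<gamma> r))"
proof -
  have inP: "\<gamma> r \<in> polyhedron K" if "r \<in> {0..1}" for r
    using assms(2) that by (auto simp: path_image_def)
  define S where "S = (\<lambda>r. cell_of K (\<gamma> r)) ` {0..<1}"
  define Z where "Z = (\<lambda>c d. c \<in> S \<and> d \<in> S \<and> (cell_le c d \<or> cell_le d c))"
  have S_cells: "S \<subseteq> cells K" using inP cell_of_in_cells by (auto simp: S_def)
  have "finite S" using finite_subset[OF S_cells finite_cells] .
  moreover have "cell_of K (\<gamma> r) \<in> S \<and> \<gamma> r \<in> closure (cell_of K (\<gamma> r))" if "r \<in> {0..<1}" for r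
  proof -
    have "\<gamma> r \<in> cell_of K (\<gamma> r)" using mem_cell_of inP that by simp
    then show ?thesis using that closure_subset by (auto simp: S_def)
  qed
  moreover have "Z (cell_of K (\<gamma> r)) d \<and> Z d (cell_of K (\<gamma> r))"
    if "r \<in> {0..<1}" "d \<in> S" "\<gamma> r \<in> closure d" for r d
    using that cell_le_cell_of S_cells by (auto simp: Z_def S_def)
  ultimately obtain d where d: "d \<in> S" "Z\<^sup>*\<^sup>* (cell_of K (\<gamma> 0)) d" "\<gamma> 1 \<in> closure d"
    using path_closure_chain[of \<gamma> S "\<lambda>r. cell_of K (\<gamma> r)" Z] assms(1)
    unfolding path_def by blast
  have "cell_le (cell_of K (\<gamma> 1)) d" using cell_le_cell_of d(1,3) S_cells by blast
  moreover have "cell_of K (\<gamma> 1) \<in> cells K" using cell_of_in_cells inP by simp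
  moreover have "cell_of K (\<gamma> 0) \<in> S" by (auto simp: S_def)
  ultimately obtain l \<pi> where "pm_path (cells K) cell_le (cell_of K (\<gamma> 0)) l \<pi>"
    "\<pi> l = cell_of K (\<gamma> 1)" "\<forall>i<l. \<pi> i \<in> S"
    using pm_path_of_zigzag[of "cells K" cell_le S] cell_le_refl S_cells d(2)
    unfolding Z_def by blast
  then show ?thesis unfolding S_def by blast
qed

end

definition cell_of_preserves_sat :: "'a::euclidean_space set set \<Rightarrow> ('p \<Rightarrow> 'a set) \<Rightarrow> 'p form \<Rightarrow> bool"
  where "cell_of_preserves_sat K V \<Phi> \<longleftrightarrow> (\<forall>y\<in>polyhedron K.
    sat_poly K V \<Phi> y \<longleftrightarrow> sat_poset (cells K) cell_le (cell_val K V) \<Phi> (cell_of K y))"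

lemma cell_of_preserves_sat_Atom:
  assumes K: "simplicial_complex K" and V: "polyhedral_valuation K V"
  shows "cell_of_preserves_sat K V (Atom p)"
proof -
  obtain C where C: "C \<subseteq> cells K" "V p = \<Union>C"
    using V unfolding polyhedral_valuation_def by blast
  have "y \<in> V p \<longleftrightarrow> cell_of K y \<subseteq> V p" if y: "y \<in> polyhedron K" for y
  proof
    assume "y \<in> V p"
    then obtain c where "c \<in> C" "y \<in> c" using C(2) by blast
    then show "cell_of K y \<subseteq> V p" using cell_of_eq[OF K] C by blast
  qed (use mem_cell_of[OF K y] in blast)
  then show ?thesis
    using cell_of_in_cells[OF K] by (auto simp: cell_of_preserves_sat_def cell_val_def)
qed

lemma cell_of_preserves_sat_Eta:
  assumes K: "simplicial_complex K"
    and f: "cell_of_preserves_sat K V f" and g: "cell_of_preserves_sat K V g"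
  shows "cell_of_preserves_sat K V (Eta f g)"
proof -
  let ?sat = "sat_poset (cells K) cell_le (cell_val K V)"
  have F: "sat_poly K V f y \<longleftrightarrow> ?sat f (cell_of K y)"
    and G: "sat_poly K V g y \<longleftrightarrow> ?sat g (cell_of K y)" if "y \<in> polyhedron K" for y
    using f g that unfolding cell_of_preserves_sat_def by blast+
  have "?sat (Eta f g) (cell_of K y)" if y: "y \<in> polyhedron K" and "sat_poly K V (Eta f g) y" for y
  proof -
    obtain \<gamma> where \<gamma>: "path \<gamma>" "path_image \<gamma> \<subseteq> polyhedron K" "\<gamma> 0 = y"
      "sat_poly K V g (\<gamma> 1)" "\<forall>r\<in>{0..<1}. sat_poly K V f (\<gamma> r)"
      using \<open>sat_poly K V (Eta f g) y\<close> by (auto simp: path_def path_image_def)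
    have inP: "\<gamma> r \<in> polyhedron K" if "r \<in> {0..1}" for r
      using \<gamma>(2) that by (auto simp: path_image_def)
    obtain l \<pi> where \<pi>: "pm_path (cells K) cell_le (cell_of K y) l \<pi>" "\<pi> l = cell_of K (\<gamma> 1)"
      "\<forall>i<l. \<exists>r\<in>{0..<1}. \<pi> i = cell_of K (\<gamma> r)"
      using pm_path_of_path[OF K \<gamma>(1,2)] \<gamma>(3) by blast
    have "?sat f (\<pi> i)" if i: "i < l" for i
    proof -
      obtain r where "r \<in> {0..<1}" "\<pi> i = cell_of K (\<gamma> r)" using \<pi>(3) i by blast
      then show ?thesis using \<gamma>(5) inP F by simp
    qed
    moreover have "?sat g (\<pi> l)" using \<pi>(2) \<gamma>(4) inP[of 1] G by simp
    ultimately show ?thesis using \<pi>(1) by auto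
  qed
  moreover have "sat_poly K V (Eta f g) y"
    if y: "y \<in> polyhedron K" and "?sat (Eta f g) (cell_of K y)" for y
  proof -
    obtain l \<pi> where \<pi>: "pm_path (cells K) cell_le (cell_of K y) l \<pi>"
      "?sat g (\<pi> l)" "\<forall>i<l. ?sat f (\<pi> i)"
      using \<open>?sat (Eta f g) (cell_of K y)\<close> by auto
    have cells: "\<pi> i \<in> cells K" if "i \<le> l" for i
      using \<pi>(1) that unfolding pm_path_def by blast
    obtain \<gamma> where \<gamma>: "path \<gamma>" "\<gamma> 0 = y" "path_image \<gamma> \<subseteq> polyhedron K" "\<gamma> 1 \<in> \<pi> l"
      "\<forall>r\<in>{0..<1}. \<exists>i<l. \<gamma> r \<in> \<pi> i"
      using path_of_pm_path[OF K y \<pi>(1)] by blast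
    have "\<gamma> 1 \<in> polyhedron K" using cells_subset_polyhedron[OF K cells] \<gamma>(4) by blast
    then have "sat_poly K V g (\<gamma> 1)"
      using cell_of_eq[OF K cells \<gamma>(4)] \<pi>(2) G by simp
    moreover have "sat_poly K V f (\<gamma> r)" if r: "r \<in> {0..<1}" for r
    proof -
      obtain i where i: "i < l" "\<gamma> r \<in> \<pi> i" using \<gamma>(5) r by blast
      then have "\<gamma> r \<in> polyhedron K" using cells_subset_polyhedron[OF K cells[of i]] by auto
      moreover have "cell_of K (\<gamma> r) = \<pi> i" using cell_of_eq[OF K cells] i by simp
      ultimately show ?thesis using \<pi>(3) F i(1) by simp
    qed
    ultimately show ?thesis
      using \<gamma>(1-3) unfolding sat_poly.simps path_def path_image_def by blast
  qed
  ultimately show ?thesis unfolding cell_of_preserves_sat_def by blast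
qed

theorem theorem1:
  fixes K :: "'a::euclidean_space set set" and V :: "'p \<Rightarrow> 'a set"
    and x :: 'a and \<Phi> :: "'p form"
  assumes "simplicial_complex K" and "polyhedral_valuation K V" and "x \<in> polyhedron K"
  shows "sat_poly K V \<Phi> x \<longleftrightarrow> sat_poset (cells K) cell_le (cell_val K V) \<Phi> (cell_of K x)"
proof -
  have "cell_of_preserves_sat K V \<Phi>"
  proof (induction \<Phi>)
    case (Atom p)
    show ?case using cell_of_preserves_sat_Atom[OF assms(1,2)] .
  next
    case (Eta f g)
    then show ?case using cell_of_preserves_sat_Eta[OF assms(1)] by blast
  qed (simp_all add: cell_of_preserves_sat_def)
  then show ?thesis using assms(3) unfolding cell_of_preserves_sat_def by blast
qed

end
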